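(* Let $\Bbbk$ be a field of characteristic zero and let $n,d$ be integers with $n \geq 5, d \geq 4$, or $n\geq 6, d\geq 3$, or $n \geq 7, d \geq 2$. Let $S=\Bbbk[x_1,\ldots,x_n]$. Then there exists an artinian monomial ideal $I\subset S$ minimally generated by $2n-2$ elements of degree $d$ such that $S/I$ fails the WLP in degree $2d-2$.
   Context: For a monomial ideal $I$, $A=S/I$ fails the WLP in degree $i$ if $\times(x_1+\cdots+x_n): A_i\to A_{i+1}$ is neither injective nor surjective. *)

theory Defs
  imports Main "HOL-Library.Poly_Mapping"
begin

(* Polynomials over a field 'a in the variables x_0, x_1, ... are represented as
  finitely supported maps from exponent vectors (nat \<Rightarrow>\<^sub>0 nat) to coefficients.
  S = k[x_1..x_n] is the subring of polynomials involving only variables x_j with j < n. *)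

type_synonym 'a mpoly = "(nat \<Rightarrow>\<^sub>0 nat) \<Rightarrow>\<^sub>0 'a"

definition mdeg :: "(nat \<Rightarrow>\<^sub>0 nat) \<Rightarrow> nat" where
  "mdeg m = (\<Sum>j\<in>Poly_Mapping.keys m. Poly_Mapping.lookup m j)"

definition polyS :: "nat \<Rightarrow> 'a::comm_ring_1 mpoly set" where
  "polyS n = {p. \<forall>m\<in>Poly_Mapping.keys p. Poly_Mapping.keys m \<subseteq> {..<n}}"

definition homog :: "nat \<Rightarrow> nat \<Rightarrow> 'a::comm_ring_1 mpoly set" where
  "homog n i = {p \<in> polyS n. \<forall>m\<in>Poly_Mapping.keys p. mdeg m = i}"

definition var :: "nat \<Rightarrow> 'a::comm_ring_1 mpoly" where
  "var j = Poly_Mapping.single (Poly_Mapping.single j 1) 1"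

definition monom :: "(nat \<Rightarrow>\<^sub>0 nat) \<Rightarrow> 'a::comm_ring_1 mpoly" where
  "monom m = Poly_Mapping.single m 1"

definition const :: "'a::comm_ring_1 \<Rightarrow> 'a mpoly" where
  "const c = Poly_Mapping.single 0 c"

definition ideal_gen :: "nat \<Rightarrow> 'a::comm_ring_1 mpoly set \<Rightarrow> 'a mpoly set" where
  "ideal_gen n H = {p. \<exists>q. (\<forall>h\<in>H. q h \<in> polyS n) \<and> p = (\<Sum>h\<in>H. q h * h)}"

(* S/I is artinian, i.e. finite dimensional over the field: there is a finite set B
  whose classes span S/I. *)
definition artinian_quot :: "nat \<Rightarrow> 'a::field mpoly set \<Rightarrow> bool" where
  "artinian_quot n I \<longleftrightarrow> (\<exists>B. finite B \<and> B \<subseteq> polyS n \<and>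
     (\<forall>p\<in>polyS n. \<exists>c. p - (\<Sum>b\<in>B. const (c b) * b) \<in> I))"

definition lin_form :: "nat \<Rightarrow> 'a::comm_ring_1 mpoly" where
  "lin_form n = (\<Sum>j<n. var j)"

definition mult_injective :: "nat \<Rightarrow> 'a::field mpoly set \<Rightarrow> nat \<Rightarrow> bool" where
  "mult_injective n I i \<longleftrightarrow> (\<forall>f\<in>homog n i. lin_form n * f \<in> I \<longrightarrow> f \<in> I)"

definition mult_surjective :: "nat \<Rightarrow> 'a::field mpoly set \<Rightarrow> nat \<Rightarrow> bool" where
  "mult_surjective n I i \<longleftrightarrow> (\<forall>g\<in>homog n (Suc i). \<exists>f\<in>homog n i. g - lin_form n * f \<in> I)"

definition fails_WLP_in_degree :: "nat \<Rightarrow> 'a::field mpoly set \<Rightarrow> nat \<Rightarrow> bool" where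
  "fails_WLP_in_degree n I i \<longleftrightarrow> \<not> mult_injective n I i \<and> \<not> mult_surjective n I i"

end

theory Submission
  imports Defs HOL.Vector_Spaces "HOL-Library.Function_Algebras" "HOL-Library.FuncSet"
begin

text \<open>
  Number the variables from 0 and let I = (x_j^d : j < n) + (x_2^(d-1) x_j : j \<noteq> 2, 3).
  Its 2n - 2 generators have the same degree, hence none divides another and they generate
  minimally; the pure powers make S/I artinian. The monomial x_2^(d-1) x_3^(d-1) of degree 2d - 2
  is not in I, but all its products with variables are, so multiplication by
  L = x_0 + ... + x_(n-1) is not injective in degree 2d - 2.

  Surjectivity fails because some linear functional on S_(2d-1) kills both I and L S_(2d-2):
  for linear forms l_j with sum 0, let \<psi>(f) be the coefficient of a fixed monomial x^t in
  f(l_0, ..., l_(n-1)). Then \<psi>(L f) = 0, and \<psi> kills every monomial whose exponent of x_j exceeds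
  the degree of x^t in the variables of l_j. Suitable l_j, t and a monomial g with \<psi>(g) \<noteq> 0 come
  from three pairs of opposite variables (n \<ge> 6, d \<ge> 3 or n \<ge> 7) or, for n \<ge> 5 and d \<ge> 4,
  from the differences around a triangle, where \<psi>(g) = -(d - 1) is nonzero in characteristic 0.
\<close>

abbreviation keys :: "('a \<Rightarrow>\<^sub>0 'b::zero) \<Rightarrow> 'a set" where "keys \<equiv> Poly_Mapping.keys"
abbreviation lookup :: "('a \<Rightarrow>\<^sub>0 'b::zero) \<Rightarrow> 'a \<Rightarrow> 'b" where "lookup \<equiv> Poly_Mapping.lookup"
abbreviation single :: "'a \<Rightarrow> 'b::zero \<Rightarrow> 'a \<Rightarrow>\<^sub>0 'b" where "single \<equiv> Poly_Mapping.single"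

lemma poly_mapping_expansion: "p = (\<Sum>k\<in>keys p. single k (lookup p k))"
  by (rule poly_mapping_eqI) (simp add: lookup_sum lookup_single when_def in_keys_iff)

lemma lookup_mult_single:
  fixes A :: "'k::cancel_comm_monoid_add \<Rightarrow>\<^sub>0 'a::comm_semiring_1"
  shows "lookup (A * single m c) x = (if \<exists>k. x = k + m then lookup A (x - m) * c else 0)"
proof -
  have "A * single m c = (\<Sum>k\<in>keys A. single (k + m) (lookup A k * c))"
    by (subst poly_mapping_expansion[of A]) (simp add: sum_distrib_right mult_single)
  then have "lookup (A * single m c) x = (\<Sum>k\<in>keys A. if k + m = x then lookup A k * c else 0)"
    by (simp add: lookup_sum lookup_single when_def)
  also have "\<dots> = (if \<exists>k. x = k + m then lookup A (x - m) * c else 0)"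
  proof (cases "\<exists>k. x = k + m")
    case True
    then obtain k0 where x: "x = k0 + m" by blast
    then have "(\<Sum>k\<in>keys A. if k + m = x then lookup A k * c else 0)
        = (\<Sum>k\<in>keys A. if k = k0 then lookup A k * c else 0)"
      by (intro sum.cong) auto
    then show ?thesis
      using x by (simp add: in_keys_iff)
  qed (auto intro!: sum.neutral)
  finally show ?thesis .
qed

lemma lookup_mult_single_add:
  fixes A :: "'k::cancel_comm_monoid_add \<Rightarrow>\<^sub>0 'a::comm_semiring_1"
  shows "lookup (A * single m c) (k + m) = lookup A k * c"
  by (simp add: lookup_mult_single)

lemma lookup_mult_single_eq_0:
  fixes A :: "'k::cancel_comm_monoid_add \<Rightarrow>\<^sub>0 'a::comm_semiring_1"
  shows "(\<And>k. x \<noteq> k + m) \<Longrightarrow> lookup (A * single m c) x = 0"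
  by (simp add: lookup_mult_single)

lemma keys_add_exps: "keys (a + b :: nat \<Rightarrow>\<^sub>0 nat) = keys a \<union> keys b"
  by (auto simp: in_keys_iff lookup_add)

lemma mdeg_eq_sum: "finite K \<Longrightarrow> keys m \<subseteq> K \<Longrightarrow> mdeg m = (\<Sum>j\<in>K. lookup m j)"
  unfolding mdeg_def by (rule sum.mono_neutral_left) (auto simp: in_keys_iff)

lemma mdeg_add: "mdeg (a + b) = mdeg a + mdeg b"
proof -
  let ?K = "keys a \<union> keys b"
  have "mdeg (a + b) = (\<Sum>j\<in>?K. lookup (a + b) j)"
    by (rule mdeg_eq_sum) (auto simp: keys_add_exps)
  also have "\<dots> = mdeg a + mdeg b"
    using mdeg_eq_sum[of ?K a] mdeg_eq_sum[of ?K b] by (simp add: lookup_add sum.distrib)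
  finally show ?thesis .
qed

lemma mdeg_single [simp]: "mdeg (single j k) = k"
  unfolding mdeg_def by auto

lemma mdeg_eq_0_iff: "mdeg m = 0 \<longleftrightarrow> m = 0"
  unfolding mdeg_def by (auto simp: poly_mapping_eqI in_keys_iff)

lemma inj_monom: "inj (monom :: _ \<Rightarrow> 'a::comm_ring_1 mpoly)"
  by (rule injI) (metis monom_def lookup_single_eq lookup_single_not_eq zero_neq_one)

lemma keys_monom [simp]: "keys (monom m :: 'a::comm_ring_1 mpoly) = {m}"
  unfolding monom_def by simp

lemma var_power: "var j ^ k = (monom (single j k) :: 'a::comm_ring_1 mpoly)"
  by (induction k) (simp_all add: var_def monom_def mult_single single_add[symmetric])

lemma lookup_mult_var_add: "lookup (p * var j) (k + single j 1) = lookup (p :: 'a::comm_ring_1 mpoly) k"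
  unfolding var_def by (simp add: lookup_mult_single_add)

lemma lookup_mult_var_eq_0: "lookup k j = 0 \<Longrightarrow> lookup (p * var j) k = (0 :: 'a::comm_ring_1)"
  unfolding var_def by (rule lookup_mult_single_eq_0) (auto simp: lookup_add)

lemma lin_form_mult_monom:
  "lin_form n * monom u = (\<Sum>j<n. monom (u + single j 1) :: 'a::comm_ring_1 mpoly)"
  unfolding lin_form_def var_def monom_def by (simp add: sum_distrib_right mult_single add.commute)

definition monom_multiples :: "(nat \<Rightarrow>\<^sub>0 nat) set \<Rightarrow> (nat \<Rightarrow>\<^sub>0 nat) set" where
  "monom_multiples M = {c + m | c m. m \<in> M}"

lemma exps_add_eq_0D: "a + b = (0 :: nat \<Rightarrow>\<^sub>0 nat) \<Longrightarrow> a = 0"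
  by (metis add_is_0 mdeg_add mdeg_eq_0_iff)

lemma sum_mem_polyS: "(\<And>i. i \<in> A \<Longrightarrow> f i \<in> polyS n) \<Longrightarrow> (\<Sum>i\<in>A. f i) \<in> polyS n"
  using keys_sum[of f A] unfolding polyS_def by blast

lemma mult_mem_ideal_gen:
  assumes "finite H" "h \<in> H" "r \<in> polyS n"
  shows "r * h \<in> ideal_gen n H"
proof -
  have "(\<Sum>h'\<in>H. (if h' = h then r else 0) * h') = (\<Sum>h'\<in>H. if h' = h then r * h else 0)"
    by (rule sum.cong) auto
  then have "r * h = (\<Sum>h'\<in>H. (if h' = h then r else 0) * h')"
    using assms(1,2) by simp
  moreover have "(0 :: 'a mpoly) \<in> polyS n"
    by (simp add: polyS_def)
  ultimately show ?thesis
    using assms(3) unfolding ideal_gen_def by (auto intro!: exI[of _ "\<lambda>h'. if h' = h then r else 0"])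
qed

lemma gen_mem_ideal_gen: "finite H \<Longrightarrow> h \<in> H \<Longrightarrow> h \<in> ideal_gen n H"
  using mult_mem_ideal_gen[of H h 1 n] by (simp add: polyS_def)

lemma sum_mem_ideal_gen:
  assumes "\<And>i. i \<in> A \<Longrightarrow> f i \<in> ideal_gen n H"
  shows "(\<Sum>i\<in>A. f i) \<in> ideal_gen n H"
proof -
  from assms have "\<forall>i\<in>A. \<exists>q. (\<forall>h\<in>H. q h \<in> polyS n) \<and> f i = (\<Sum>h\<in>H. q h * h)"
    unfolding ideal_gen_def by blast
  from bchoice[OF this] obtain q where q: "\<And>i h. i \<in> A \<Longrightarrow> h \<in> H \<Longrightarrow> q i h \<in> polyS n"
    and f: "\<And>i. i \<in> A \<Longrightarrow> f i = (\<Sum>h\<in>H. q i h * h)"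
    by blast
  have "(\<Sum>i\<in>A. f i) = (\<Sum>h\<in>H. (\<Sum>i\<in>A. q i h) * h)"
    by (simp add: f sum_distrib_right sum.swap[of _ A])
  then show ?thesis
    unfolding ideal_gen_def using q by (auto intro!: exI[of _ "\<lambda>h. \<Sum>i\<in>A. q i h"] sum_mem_polyS)
qed

lemma keys_subset_monom_multiples:
  assumes "p \<in> ideal_gen n (monom ` M :: 'a::comm_ring_1 mpoly set)"
  shows "keys p \<subseteq> monom_multiples M"
proof
  fix k assume k: "k \<in> keys p"
  obtain q where "p = (\<Sum>h\<in>monom ` M. q h * h)"
    using assms unfolding ideal_gen_def by blast
  with k obtain m where "m \<in> M" "k \<in> keys (q (monom m) * monom m)"
    using keys_sum by fastforce
  moreover from this obtain c where "k = c + m"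
    using keys_mult[of "q (monom m)" "monom m"] by auto
  ultimately show "k \<in> monom_multiples M"
    by (auto simp: monom_multiples_def)
qed

lemma ideal_gen_monomI:
  assumes "finite M" "p \<in> polyS n" "keys p \<subseteq> monom_multiples M"
  shows "p \<in> ideal_gen n (monom ` M :: 'a::comm_ring_1 mpoly set)"
proof -
  have "single k (lookup p k) \<in> ideal_gen n (monom ` M)" if "k \<in> keys p" for k
  proof -
    obtain c m where "m \<in> M" "k = c + m"
      using assms(3) \<open>k \<in> keys p\<close> by (auto simp: monom_multiples_def)
    moreover have "keys k \<subseteq> {..<n}"
      using assms(2) that by (auto simp: polyS_def)
    then have "keys c \<subseteq> {..<n}"
      using \<open>k = c + m\<close> by (simp add: keys_add_exps)
    ultimately show ?thesis
      using mult_mem_ideal_gen[of "monom ` M" "monom m" "single c (lookup p k)" n] assms(1)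
      by (simp add: polyS_def monom_def mult_single)
  qed
  then show ?thesis
    by (subst poly_mapping_expansion) (rule sum_mem_ideal_gen)
qed

lemma lookup_mult_at_minimal:
  fixes r h :: "'a::comm_ring_1 mpoly"
  assumes "keys h \<subseteq> monom_multiples M" and minimal: "\<And>m' c. m' \<in> M \<Longrightarrow> m = c + m' \<Longrightarrow> c = 0"
  shows "lookup (r * h) m = lookup r 0 * lookup h m"
proof -
  have "lookup h k = 0" if "m = k + a" "a \<noteq> 0" for k a
  proof (rule ccontr)
    assume "lookup h k \<noteq> 0"
    then obtain c m' where "m' \<in> M" "k = c + m'"
      using assms(1) by (auto simp: in_keys_iff monom_multiples_def)
    then have "a + c = 0"
      using minimal that(1) by (metis add.assoc add.commute)
    then show False
      using that(2) exps_add_eq_0D by blast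
  qed
  then have "lookup (h * single a (lookup r a)) m = (if a = 0 then lookup r 0 * lookup h m else 0)" for a
    by (auto simp: lookup_mult_single)
  moreover have "r * h = h * (\<Sum>a\<in>keys r. single a (lookup r a))"
    by (metis poly_mapping_expansion mult.commute)
  ultimately show ?thesis
    by (simp add: sum_distrib_left lookup_sum in_keys_iff)
qed

lemma sum_fun_apply: "(\<Sum>b\<in>B. f b) x = (\<Sum>b\<in>B. f b x)"
  by (induction B rule: infinite_finite_induct) auto

lemma card_le_card_if_identity_factors:
  fixes C :: "'x \<Rightarrow> 'y \<Rightarrow> 'a::field" and V :: "'y \<Rightarrow> 'x \<Rightarrow> 'a"
  assumes "finite B"
    and id: "\<And>a a'. a \<in> A \<Longrightarrow> a' \<in> A \<Longrightarrow> (\<Sum>b\<in>B. C a b * V b a') = (if a = a' then 1 else 0)"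
  shows "card A \<le> card B"
proof -
  interpret VS: vector_space "\<lambda>(c::'a) (f::'x \<Rightarrow> 'a) x. c * f x"
    by unfold_locales (auto simp: algebra_simps fun_eq_iff)
  define w where "w b = (\<lambda>x. if x \<in> A then V b x else 0)" for b
  define e where "e a = (\<lambda>x::'x. if x = a then (1::'a) else 0)" for a
  have expansion: "e a = (\<Sum>b\<in>B. (\<lambda>x. C a b * w b x))" if "a \<in> A" for a
  proof
    fix x
    show "e a x = (\<Sum>b\<in>B. (\<lambda>x. C a b * w b x)) x"
      using id[OF that] that by (cases "x \<in> A") (auto simp: e_def w_def sum_fun_apply)
  qed
  have span: "e ` A \<subseteq> VS.span (w ` B)"
  proof
    fix v assume "v \<in> e ` A"
    then obtain a where "a \<in> A" "v = e a" by blast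
    have "(\<Sum>b\<in>B. (\<lambda>x. C a b * w b x)) \<in> VS.span (w ` B)"
      by (intro VS.span_sum VS.span_scale VS.span_base) auto
    then show "v \<in> VS.span (w ` B)"
      using expansion[OF \<open>a \<in> A\<close>] \<open>v = e a\<close> by simp
  qed
  have indep: "VS.independent (e ` A)"
    unfolding VS.independent_explicit_module
  proof (intro allI impI)
    fix t u v assume t: "finite t" "t \<subseteq> e ` A" "(\<Sum>v\<in>t. (\<lambda>x. u v * v x)) = 0" "v \<in> t"
    then obtain a where a: "a \<in> A" "v = e a" by auto
    have vals: "v' a = (if v' = v then 1 else 0)" if v': "v' \<in> t" for v'
    proof -
      obtain a' where "v' = e a'"
        using v' t(2) by blast
      then show ?thesis
        using a by (cases "a' = a") (auto simp: e_def dest: fun_cong[where x = a])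
    qed
    have "(\<Sum>v'\<in>t. u v' * v' a) = (\<Sum>v'\<in>t. if v' = v then u v else 0)"
      by (intro sum.cong refl) (simp add: vals)
    also have "\<dots> = u v"
      using t(1,4) by simp
    finally have "(\<Sum>v'\<in>t. u v' * v' a) = u v" .
    moreover have "(\<Sum>v'\<in>t. u v' * v' a) = 0"
      using fun_cong[OF t(3), of a] by (simp add: sum_fun_apply)
    ultimately show "u v = 0" by simp
  qed
  have "card (e ` A) \<le> card (w ` B)"
    using VS.independent_span_bound[OF finite_imageI[OF assms(1)] indep span] by simp
  moreover have "card (e ` A) = card A"
    by (rule card_image) (auto simp: inj_on_def e_def fun_eq_iff)
  moreover have "card (w ` B) \<le> card B"
    by (rule card_image_le[OF assms(1)])
  ultimately show ?thesis by simp
qed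

lemma card_le_card_if_ideal_gen_eq:
  fixes M :: "(nat \<Rightarrow>\<^sub>0 nat) set"
  assumes "finite M" and antichain: "\<And>m m' c. m \<in> M \<Longrightarrow> m' \<in> M \<Longrightarrow> m = c + m' \<Longrightarrow> c = 0"
    and "finite H" and eq: "ideal_gen n H = ideal_gen n (monom ` M :: 'a::field mpoly set)"
  shows "card M \<le> card H"
proof -
  have "\<forall>m\<in>M. \<exists>r. (\<forall>h\<in>H. r h \<in> polyS n) \<and> monom m = (\<Sum>h\<in>H. r h * h)"
    using gen_mem_ideal_gen[of "monom ` M"] \<open>finite M\<close> eq unfolding ideal_gen_def by blast
  from bchoice[OF this] obtain R where R: "\<And>m. m \<in> M \<Longrightarrow> monom m = (\<Sum>h\<in>H. R m h * h)"
    by blast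
  have keys_H: "keys h \<subseteq> monom_multiples M" if "h \<in> H" for h
    using gen_mem_ideal_gen[OF \<open>finite H\<close> that, of n] eq by (simp add: keys_subset_monom_multiples)
  txt \<open>Minimality of m' in M makes the coefficient of x^m' in R m h * h depend only on the
    constant term of R m h, so the identity matrix on M factors through H.\<close>
  show ?thesis
  proof (rule card_le_card_if_identity_factors[OF \<open>finite H\<close>])
    fix m m' assume "m \<in> M" "m' \<in> M"
    have "(if m = m' then 1 else 0) = lookup (monom m :: 'a mpoly) m'"
      by (simp add: monom_def lookup_single)
    also have "\<dots> = (\<Sum>h\<in>H. lookup (R m h * h) m')"
      using R[OF \<open>m \<in> M\<close>] by (simp add: lookup_sum)
    also have "\<dots> = (\<Sum>h\<in>H. lookup (R m h) 0 * lookup h m')"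
      by (intro sum.cong refl lookup_mult_at_minimal[where M = M] keys_H)
        (use antichain \<open>m' \<in> M\<close> in blast)+
    finally show "(\<Sum>h\<in>H. lookup (R m h) 0 * lookup h m') = (if m = m' then 1 else 0)"
      by simp
  qed
qed

lemma finite_bounded_exps:
  "finite {m :: nat \<Rightarrow>\<^sub>0 nat. keys m \<subseteq> {..<n} \<and> (\<forall>j. lookup m j < d)}" (is "finite ?Box")
proof -
  have "inj_on (\<lambda>m. restrict (lookup m) {..<n}) ?Box"
  proof (rule inj_onI)
    fix x y assume "x \<in> ?Box" "y \<in> ?Box" and eq: "restrict (lookup x) {..<n} = restrict (lookup y) {..<n}"
    show "x = y"
    proof (rule poly_mapping_eqI)
      fix j
      show "lookup x j = lookup y j"
      proof (cases "j < n")
        case True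
        then show ?thesis
          using fun_cong[OF eq, of j] by simp
      next
        case False
        then have "j \<notin> keys x" "j \<notin> keys y"
          using \<open>x \<in> ?Box\<close> \<open>y \<in> ?Box\<close> by auto
        then show ?thesis
          by (simp add: in_keys_iff)
      qed
    qed
  qed
  moreover have "(\<lambda>m. restrict (lookup m) {..<n}) ` ?Box \<subseteq> PiE {..<n} (\<lambda>_. {..<d})"
    by (auto simp: PiE_def extensional_def)
  ultimately show ?thesis
    by (meson finite_PiE finite_lessThan finite_imageD finite_subset)
qed

lemma artinian_quot_if_pure_powers:
  assumes "finite M" "0 < d" and powers: "\<And>j. j < n \<Longrightarrow> single j d \<in> M"
  shows "artinian_quot n (ideal_gen n (monom ` M :: 'a::field mpoly set))"
proof -
  define Box where "Box = {m :: nat \<Rightarrow>\<^sub>0 nat. keys m \<subseteq> {..<n} \<and> (\<forall>j. lookup m j < d)}"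
  have "finite Box"
    unfolding Box_def by (rule finite_bounded_exps)
  have "\<exists>c. p - (\<Sum>b\<in>monom ` Box. const (c b) * b) \<in> ideal_gen n (monom ` M)"
    if p: "p \<in> polyS n" for p :: "'a mpoly"
  proof -
    define c where "c b = lookup p (the_elem (keys b))" for b :: "'a mpoly"
    define q where "q = p - (\<Sum>b\<in>monom ` Box. const (c b) * b)"
    have "(\<Sum>b\<in>monom ` Box. const (c b) * b) = (\<Sum>m\<in>Box. const (lookup p m) * monom m)"
      by (simp add: sum.reindex[OF inj_on_subset[OF inj_monom subset_UNIV]] c_def)
    then have "q = p - (\<Sum>m\<in>Box. single m (lookup p m))"
      by (simp add: q_def const_def monom_def mult_single)
    then have lookup_q: "lookup q k = (if k \<in> Box then 0 else lookup p k)" for k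
      using \<open>finite Box\<close> by (simp add: lookup_minus lookup_sum lookup_single when_def)
    have "q \<in> polyS n"
      using p by (auto simp: polyS_def lookup_q in_keys_iff split: if_splits)
    moreover have "keys q \<subseteq> monom_multiples M"
    proof
      fix k assume "k \<in> keys q"
      then have "k \<notin> Box" "k \<in> keys p"
        by (auto simp: lookup_q in_keys_iff split: if_splits)
      then obtain j where "d \<le> lookup k j" "keys k \<subseteq> {..<n}"
        using p by (auto simp: Box_def polyS_def not_less)
      moreover have "j \<in> keys k"
        using \<open>0 < d\<close> \<open>d \<le> lookup k j\<close> by (simp add: in_keys_iff)
      ultimately have "j < n"
        by blast
      have "k = (k - single j d) + single j d"
        using \<open>d \<le> lookup k j\<close> by (intro poly_mapping_eqI) (auto simp: lookup_add lookup_minus lookup_single when_def)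
      then show "k \<in> monom_multiples M"
        using powers[OF \<open>j < n\<close>] unfolding monom_multiples_def by blast
    qed
    ultimately show ?thesis
      unfolding q_def using ideal_gen_monomI[OF \<open>finite M\<close>] by blast
  qed
  moreover have "monom ` Box \<subseteq> polyS n"
    by (auto simp: polyS_def Box_def)
  ultimately show ?thesis
    unfolding artinian_quot_def using \<open>finite Box\<close> by blast
qed

lemma not_mult_injective_if_socle_monom:
  assumes "finite M" "keys u \<subseteq> {..<n}" "mdeg u = i" "u \<notin> monom_multiples M"
    and socle: "\<And>j. j < n \<Longrightarrow> u + single j 1 \<in> monom_multiples M"
  shows "\<not> mult_injective n (ideal_gen n (monom ` M :: 'a::field mpoly set)) i"
proof
  assume "mult_injective n (ideal_gen n (monom ` M :: 'a mpoly set)) i"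
  moreover have "lin_form n * monom u \<in> ideal_gen n (monom ` M :: 'a mpoly set)"
    unfolding lin_form_mult_monom
    by (intro sum_mem_ideal_gen ideal_gen_monomI) (use assms in \<open>auto simp: polyS_def keys_add_exps\<close>)
  moreover have "monom u \<in> homog n i"
    using assms(2,3) by (simp add: homog_def polyS_def)
  ultimately have "monom u \<in> ideal_gen n (monom ` M :: 'a mpoly set)"
    unfolding mult_injective_def by blast
  then show False
    using keys_subset_monom_multiples \<open>u \<notin> monom_multiples M\<close> by fastforce
qed

definition lin_ext :: "((nat \<Rightarrow>\<^sub>0 nat) \<Rightarrow> 'a::comm_ring_1) \<Rightarrow> 'a mpoly \<Rightarrow> 'a" where
  "lin_ext \<psi> p = (\<Sum>k\<in>keys p. lookup p k * \<psi> k)"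

lemma lin_ext_add: "lin_ext \<psi> (p + q) = lin_ext \<psi> p + lin_ext \<psi> q"
  unfolding lin_ext_def by (rule setsum_keys_plus_distrib) (auto simp: algebra_simps)

lemma lin_ext_diff: "lin_ext \<psi> (p - q) = lin_ext \<psi> p - lin_ext \<psi> q"
  using lin_ext_add[of \<psi> p "- q"] by (simp add: lin_ext_def sum_negf)

lemma lin_ext_0 [simp]: "lin_ext \<psi> 0 = 0"
  unfolding lin_ext_def by simp

lemma lin_ext_sum: "lin_ext \<psi> (\<Sum>i\<in>I. f i) = (\<Sum>i\<in>I. lin_ext \<psi> (f i))"
  by (induction I rule: infinite_finite_induct) (simp_all add: lin_ext_add)

lemma lin_ext_single: "lin_ext \<psi> (single k c) = c * \<psi> k"
  unfolding lin_ext_def by auto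

lemma lin_ext_eq_0: "(\<And>k. k \<in> keys p \<Longrightarrow> \<psi> k = 0) \<Longrightarrow> lin_ext \<psi> p = 0"
  unfolding lin_ext_def by simp

lemma lin_ext_lin_form_mult_eq_0:
  assumes "\<And>u. (\<Sum>j<n. \<psi> (u + single j 1)) = 0"
  shows "lin_ext \<psi> (lin_form n * f) = 0"
proof -
  have "lin_form n * f = (\<Sum>k\<in>keys f. \<Sum>j<n. single (k + single j 1) (lookup f k))"
    unfolding lin_form_def var_def
    by (subst poly_mapping_expansion[of f]) (simp add: sum_distrib_left sum_distrib_right mult_single add.commute)
  then have "lin_ext \<psi> (lin_form n * f) = (\<Sum>k\<in>keys f. lookup f k * (\<Sum>j<n. \<psi> (k + single j 1)))"
    by (simp add: lin_ext_sum lin_ext_single sum_distrib_left)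
  then show ?thesis
    using assms by simp
qed

lemma not_mult_surjective_if_functional:
  fixes \<psi> :: "(nat \<Rightarrow>\<^sub>0 nat) \<Rightarrow> 'a::field"
  assumes "\<And>k. k \<in> monom_multiples M \<Longrightarrow> \<psi> k = 0"
    and "\<And>u. (\<Sum>j<n. \<psi> (u + single j 1)) = 0"
    and "keys g \<subseteq> {..<n}" "mdeg g = Suc i" "\<psi> g \<noteq> 0"
  shows "\<not> mult_surjective n (ideal_gen n (monom ` M :: 'a mpoly set)) i"
proof
  assume "mult_surjective n (ideal_gen n (monom ` M :: 'a mpoly set)) i"
  moreover have "monom g \<in> homog n (Suc i)"
    using assms(3,4) by (simp add: homog_def polyS_def)
  ultimately obtain f where "monom g - lin_form n * f \<in> ideal_gen n (monom ` M :: 'a mpoly set)"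
    unfolding mult_surjective_def by blast
  then have "lin_ext \<psi> (monom g - lin_form n * f) = 0"
    using assms(1) keys_subset_monom_multiples by (blast intro: lin_ext_eq_0)
  then show False
    using assms(5) lin_ext_lin_form_mult_eq_0[OF assms(2)]
    by (simp add: lin_ext_diff monom_def lin_ext_single)
qed

definition weight :: "nat set \<Rightarrow> (nat \<Rightarrow>\<^sub>0 nat) \<Rightarrow> nat" where
  "weight S k = (\<Sum>s\<in>S. lookup k s)"

lemma weight_add: "weight S (a + b) = weight S a + weight S b"
  unfolding weight_def by (simp add: lookup_add sum.distrib)

lemma weight_single: "finite S \<Longrightarrow> weight S (single j k) = (if j \<in> S then k else 0)"
  unfolding weight_def by (simp add: lookup_single when_def)

lemma keys_power_weight:
  fixes l :: "'a::comm_ring_1 mpoly"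
  assumes "keys l \<subseteq> {k. weight S k = w}"
  shows "keys (l ^ e) \<subseteq> {k. weight S k = e * w}"
proof (induction e)
  case (Suc e)
  show ?case
  proof
    fix x assume "x \<in> keys (l ^ Suc e)"
    then obtain a b where "x = a + b" "a \<in> keys l" "b \<in> keys (l ^ e)"
      using keys_mult[of l "l ^ e"] by auto
    then show "x \<in> {k. weight S k = Suc e * w}"
      using assms Suc.IH by (force simp: weight_add)
  qed
qed (simp add: weight_def)

lemma keys_var_weight:
  "finite S \<Longrightarrow> keys (var a :: 'a::comm_ring_1 mpoly) \<subseteq> {k. weight S k = (if a \<in> S then 1 else 0)}"
  by (simp add: var_def weight_single)

lemma keys_var_diff_weight:
  assumes "finite S" "a \<in> S" "b \<in> S"
  shows "keys (var a - var b :: 'a::comm_ring_1 mpoly) \<subseteq> {k. weight S k = 1}"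
  using keys_diff[of "var a :: 'a mpoly" "var b"] keys_var_weight[OF assms(1), of a] keys_var_weight[OF assms(1), of b]
    assms(2,3) by auto

definition subst_coeff :: "(nat \<Rightarrow> 'a::comm_ring_1 mpoly) \<Rightarrow> nat \<Rightarrow> (nat \<Rightarrow>\<^sub>0 nat) \<Rightarrow> (nat \<Rightarrow>\<^sub>0 nat) \<Rightarrow> 'a" where
  "subst_coeff l n t k = lookup (\<Prod>j<n. l j ^ lookup k j) t"

lemma subst_coeff_sum_shift_eq_0:
  assumes "(\<Sum>j<n. l j) = 0"
  shows "(\<Sum>j<n. subst_coeff l n t (u + single j 1)) = 0"
proof -
  have "(\<Prod>i<n. l i ^ lookup (u + single j 1) i) = l j * (\<Prod>i<n. l i ^ lookup u i)" if "j < n" for j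
  proof -
    have "(\<Prod>i<n. l i ^ lookup (u + single j 1) i) = (\<Prod>i<n. l i ^ lookup u i * (if i = j then l i else 1))"
      by (rule prod.cong) (auto simp: lookup_add lookup_single when_def)
    also have "\<dots> = (\<Prod>i<n. l i ^ lookup u i) * l j"
      using that by (simp add: prod.distrib)
    finally show ?thesis
      by (simp add: mult.commute)
  qed
  then have "(\<Sum>j<n. subst_coeff l n t (u + single j 1)) = lookup ((\<Sum>j<n. l j) * (\<Prod>i<n. l i ^ lookup u i)) t"
    by (simp add: subst_coeff_def lookup_sum sum_distrib_right)
  then show ?thesis
    using assms by simp
qed

lemma subst_coeff_eq_0_if_weight_less:
  assumes "j < n" "keys (l j) \<subseteq> {k. weight S k = 1}" "weight S t < lookup k j"
  shows "subst_coeff l n t k = 0"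
proof -
  have "(\<Prod>i<n. l i ^ lookup k i) = l j ^ lookup k j * (\<Prod>i\<in>{..<n} - {j}. l i ^ lookup k i)"
    using assms(1) by (simp add: prod.remove)
  moreover have "t \<notin> keys (l j ^ lookup k j * (\<Prod>i\<in>{..<n} - {j}. l i ^ lookup k i))"
  proof
    assume "t \<in> keys (l j ^ lookup k j * (\<Prod>i\<in>{..<n} - {j}. l i ^ lookup k i))"
    then obtain a b where "t = a + b" "a \<in> keys (l j ^ lookup k j)"
      using keys_mult by blast
    then have "lookup k j \<le> weight S t"
      using keys_power_weight[OF assms(2), of "lookup k j"] by (auto simp: weight_add)
    then show False
      using assms(3) by simp
  qed
  ultimately show ?thesis
    unfolding subst_coeff_def by (simp add: in_keys_iff)
qed

lemma subst_coeff_eq_lookup_prod: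
  assumes "finite T" "T \<subseteq> {..<n}" "\<And>j. j \<notin> T \<Longrightarrow> lookup k j = 0"
  shows "subst_coeff l n t k = lookup (\<Prod>j\<in>T. l j ^ lookup k j) t"
proof -
  have "(\<Prod>j<n. l j ^ lookup k j) = (\<Prod>j\<in>T. l j ^ lookup k j)"
    by (rule prod.mono_neutral_right) (use assms in auto)
  then show ?thesis
    unfolding subst_coeff_def by simp
qed

definition gen_exps :: "nat \<Rightarrow> nat \<Rightarrow> (nat \<Rightarrow>\<^sub>0 nat) set" where
  "gen_exps n d = (\<lambda>j. single j d) ` {..<n} \<union> (\<lambda>j. single 2 (d - 1) + single j 1) ` ({..<n} - {2, 3})"

lemma finite_gen_exps: "finite (gen_exps n d)"
  unfolding gen_exps_def by simp

lemma gen_exps_keys_mdeg: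
  assumes "m \<in> gen_exps n d" "2 < n" "0 < d"
  shows "keys m \<subseteq> {..<n} \<and> mdeg m = d"
  using assms unfolding gen_exps_def by (auto simp: keys_add_exps mdeg_add split: if_splits)

lemma gen_exps_antichain:
  assumes "m \<in> gen_exps n d" "m' \<in> gen_exps n d" "m = c + m'" "2 < n" "0 < d"
  shows "c = 0"
  using gen_exps_keys_mdeg[OF assms(1,4,5)] gen_exps_keys_mdeg[OF assms(2,4,5)] assms(3)
  by (simp add: mdeg_add flip: mdeg_eq_0_iff)

lemma card_gen_exps:
  assumes "3 < n" "1 < d"
  shows "card (gen_exps n d) = 2 * n - 2"
proof -
  let ?P = "(\<lambda>j. single j d) ` {..<n}"
  let ?Q = "(\<lambda>j. single 2 (d - 1) + single j 1) ` ({..<n} - {2, 3})"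
  have "inj_on (\<lambda>j. single j d) {..<n}"
    using assms by (intro inj_onI) (metis lookup_single_eq lookup_single_not_eq not_one_less_zero)
  then have "card ?P = n"
    by (simp add: card_image)
  have "inj_on (\<lambda>j. single 2 (d - 1) + single j (1::nat)) ({..<n} - {2, 3})"
  proof (rule inj_onI)
    fix x y assume "x \<in> {..<n} - {2, 3}" "single 2 (d - 1) + single x 1 = single 2 (d - 1) + single y (1::nat)"
    then show "x = y"
      by (metis add_left_cancel lookup_single_eq lookup_single_not_eq zero_neq_one)
  qed
  then have "card ?Q = n - 2"
    using assms by (simp add: card_image card_Diff_subset)
  have "?P \<inter> ?Q = {}"
  proof (rule ccontr)
    assume "?P \<inter> ?Q \<noteq> {}"
    then obtain x y :: nat where "y \<noteq> 2" "single x d = single 2 (d - 1) + single y (1::nat)"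
      by auto
    then have "lookup (single x d) 2 = d - 1"
      by (simp add: lookup_add lookup_single)
    then show False
      using assms by (auto simp: lookup_single when_def split: if_splits)
  qed
  then show ?thesis
    unfolding gen_exps_def using \<open>card ?P = n\<close> \<open>card ?Q = n - 2\<close> assms
    by (simp add: card_Un_disjoint)
qed

lemma gen_exps_not_mult_injective:
  assumes "3 < n" "0 < d"
  shows "\<not> mult_injective n (ideal_gen n (monom ` gen_exps n d :: 'a::field mpoly set)) (2 * d - 2)"
proof -
  define u :: "nat \<Rightarrow>\<^sub>0 nat" where "u = single 2 (d - 1) + single 3 (d - 1)"
  have "keys u \<subseteq> {..<n}" "mdeg u = 2 * d - 2"
    using assms by (auto simp: u_def keys_add_exps mdeg_add split: if_splits)
  moreover have "u \<notin> monom_multiples (gen_exps n d)"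
  proof
    assume "u \<in> monom_multiples (gen_exps n d)"
    then obtain c j where "u = c + single j d \<or> (j \<notin> {2, 3} \<and> u = c + (single 2 (d - 1) + single j 1))"
      by (auto simp: monom_multiples_def gen_exps_def)
    then have "d \<le> lookup u j \<or> (j \<notin> {2, 3} \<and> 1 \<le> lookup u j)"
      by (auto simp: lookup_add)
    then show False
      using assms by (auto simp: u_def lookup_add lookup_single when_def split: if_splits)
  qed
  moreover have "u + single j 1 \<in> monom_multiples (gen_exps n d)" if "j < n" for j
  proof (cases "j = 2 \<or> j = 3")
    case True
    then have "u + single j 1 = single (5 - j) (d - 1) + single j d"
      using assms by (auto intro!: poly_mapping_eqI simp: u_def lookup_add lookup_single when_def)
    moreover have "single j d \<in> gen_exps n d"
      using that by (simp add: gen_exps_def)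
    ultimately show ?thesis
      unfolding monom_multiples_def by blast
  next
    case False
    then have "single 2 (d - 1) + single j 1 \<in> gen_exps n d"
      using that by (simp add: gen_exps_def)
    moreover have "u + single j 1 = single 3 (d - 1) + (single 2 (d - 1) + single j 1)"
      by (simp add: u_def ac_simps)
    ultimately show ?thesis
      unfolding monom_multiples_def by blast
  qed
  ultimately show ?thesis
    by (intro not_mult_injective_if_socle_monom[OF finite_gen_exps])
qed

lemma gen_exps_not_mult_surjective_if_subst:
  fixes l :: "nat \<Rightarrow> 'a::field mpoly"
  assumes "(\<Sum>j<n. l j) = 0" and homog: "\<And>j. keys (l j) \<subseteq> {k. weight (S j) k = 1}"
    and low: "\<And>j. j < n \<Longrightarrow> weight (S j) t < d" "weight (S 2) t < d - 1" and "2 < n"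
    and "keys g \<subseteq> {..<n}" "mdeg g = Suc (2 * d - 2)" "subst_coeff l n t g \<noteq> 0"
  shows "\<not> mult_surjective n (ideal_gen n (monom ` gen_exps n d :: 'a mpoly set)) (2 * d - 2)"
proof (rule not_mult_surjective_if_functional[where \<psi> = "subst_coeff l n t" and g = g])
  show "subst_coeff l n t k = 0" if "k \<in> monom_multiples (gen_exps n d)" for k
  proof -
    from that obtain c j where "j < n" "k = c + single j d \<or> k = c + (single 2 (d - 1) + single j 1)"
      by (auto simp: monom_multiples_def gen_exps_def)
    then have "d \<le> lookup k j \<or> d - 1 \<le> lookup k 2"
      by (auto simp: lookup_add)
    then show ?thesis
    proof
      assume "d \<le> lookup k j"
      then show ?thesis
        using low(1)[OF \<open>j < n\<close>] by (intro subst_coeff_eq_0_if_weight_less[OF \<open>j < n\<close> homog]) simp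
    next
      assume "d - 1 \<le> lookup k 2"
      then show ?thesis
        using low(2) by (intro subst_coeff_eq_0_if_weight_less[OF \<open>2 < n\<close> homog]) simp
    qed
  qed
qed (use assms subst_coeff_sum_shift_eq_0 in auto)

lemma gen_exps_not_mult_surjective_pairs:
  assumes "6 \<le> n" "p < n" "p \<notin> {0, 1, 3, 4, 5}" "p = 2 \<longrightarrow> 3 \<le> d" "2 \<le> d"
  shows "\<not> mult_surjective n (ideal_gen n (monom ` gen_exps n d :: 'a::field mpoly set)) (2 * d - 2)"
proof -
  define l :: "nat \<Rightarrow> 'a mpoly" where "l j =
    (if j = 0 then var 1 else if j = 1 then - var 1 else if j = 3 then var 0 else if j = p then - var 0
     else if j = 4 then var 2 else if j = 5 then - var 2 else 0)" for j
  define S :: "nat \<Rightarrow> nat set" where "S j =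
    (if j \<in> {0, 1} then {1} else if j \<in> {3, p} then {0} else if j \<in> {4, 5} then {2} else {})" for j
  define t :: "nat \<Rightarrow>\<^sub>0 nat" where "t = single 0 1 + single 1 (d - 1) + single 2 (d - 1)"
  define g :: "nat \<Rightarrow>\<^sub>0 nat" where "g = single 3 1 + single 0 (d - 1) + single 4 (d - 1)"
  have "(\<Sum>j<n. l j) = (\<Sum>j\<in>{0, 1, 3, 4, 5, p}. l j)"
    by (rule sum.mono_neutral_right) (use assms in \<open>auto simp: l_def\<close>)
  then have "(\<Sum>j<n. l j) = 0"
    using assms(3) by (simp add: l_def)
  moreover have "keys (l j) \<subseteq> {k. weight (S j) k = 1}" for j
    using assms(3) by (auto simp: l_def S_def var_def weight_single)
  moreover have "weight (S j) t < d" "weight (S 2) t < d - 1" for j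
    using assms(3-5) by (auto simp: S_def t_def weight_add weight_single)
  moreover have "keys g \<subseteq> {..<n}" "mdeg g = Suc (2 * d - 2)"
    using assms(1,5) by (auto simp: g_def keys_add_exps mdeg_add split: if_splits)
  moreover have "subst_coeff l n t g = 1"
  proof -
    have "subst_coeff l n t g = lookup (\<Prod>j\<in>{0, 3, 4}. l j ^ lookup g j) t"
      by (rule subst_coeff_eq_lookup_prod) (use assms(1) in \<open>auto simp: g_def lookup_add lookup_single\<close>)
    also have "(\<Prod>j\<in>{0, 3, 4}. l j ^ lookup g j) = var 1 ^ (d - 1) * (var 0 * var 2 ^ (d - 1))"
      using assms(3) by (simp add: l_def g_def lookup_add lookup_single)
    also have "\<dots> = monom t"
      unfolding var_power by (simp add: var_def monom_def mult_single t_def ac_simps)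
    finally show ?thesis
      by (simp add: monom_def)
  qed
  ultimately show ?thesis
    using assms(1) by (intro gen_exps_not_mult_surjective_if_subst) auto
qed

lemma lookup_var_diff_power_pure:
  assumes "a \<noteq> b"
  shows "lookup ((var a - var b :: 'a::comm_ring_1 mpoly) ^ k) (single a k) = 1"
proof (induction k)
  case (Suc k)
  let ?B = "(var a - var b :: 'a mpoly) ^ k"
  have "lookup (?B * var a) (single a (Suc k)) = 1"
    using Suc.IH lookup_mult_var_add[of ?B a "single a k"] by (simp add: single_add[symmetric])
  moreover have "lookup (?B * var b) (single a (Suc k)) = 0"
    using assms by (simp add: lookup_mult_var_eq_0 lookup_single)
  ultimately show ?case
    by (simp add: power_Suc2 right_diff_distrib lookup_minus del: power_Suc)
qed simp

lemma lookup_var_diff_power_mixed: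
  assumes "a \<noteq> b"
  shows "lookup ((var a - var b :: 'a::comm_ring_1 mpoly) ^ k) (single a (k - 1) + single b 1) = - of_nat k"
proof (induction k)
  case 0
  have "single b 1 \<noteq> (0 :: nat \<Rightarrow>\<^sub>0 nat)"
    by (metis lookup_single_eq lookup_zero one_neq_zero)
  then show ?case
    by (simp add: lookup_one when_def)
next
  case (Suc k)
  let ?B = "(var a - var b :: 'a mpoly) ^ k"
  have "lookup (?B * var a) (single a k + single b 1) = - of_nat k"
  proof (cases k)
    case 0
    then have "lookup (single a k + single b 1) a = 0"
      using assms by (simp add: lookup_add lookup_single)
    then show ?thesis
      using 0 by (simp only: lookup_mult_var_eq_0) simp
  next
    case (Suc k')
    then have "single a k + single b 1 = (single a (k - 1) + single b 1) + single a 1"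
      by (auto intro!: poly_mapping_eqI simp: lookup_add lookup_single when_def)
    then show ?thesis
      using Suc.IH lookup_mult_var_add[of ?B a "single a (k - 1) + single b 1"] by simp
  qed
  moreover have "lookup (?B * var b) (single a k + single b 1) = 1"
    using lookup_var_diff_power_pure[OF assms, of k] lookup_mult_var_add[of ?B b "single a k"] by simp
  ultimately show ?case
    by (simp add: power_Suc2 right_diff_distrib lookup_minus del: power_Suc)
qed

lemma gen_exps_not_mult_surjective_triangle:
  assumes "5 \<le> n" "4 \<le> d"
  shows "\<not> mult_surjective n (ideal_gen n (monom ` gen_exps n d :: 'a::field_char_0 mpoly set)) (2 * d - 2)"
proof -
  define l :: "nat \<Rightarrow> 'a mpoly" where "l j =
    (if j = 0 then var 0 - var 2 else if j = 1 then var 1 - var 0 else if j = 2 then var 2 - var 1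
     else if j = 3 then var 3 else if j = 4 then - var 3 else 0)" for j
  define S :: "nat \<Rightarrow> nat set" where "S j =
    (if j = 0 then {0, 2} else if j = 1 then {0, 1} else if j = 2 then {1, 2} else if j \<in> {3, 4} then {3} else {})" for j
  define t :: "nat \<Rightarrow>\<^sub>0 nat" where "t = single 0 (d - 2) + single 1 1 + single 2 1 + single 3 (d - 1)"
  define g :: "nat \<Rightarrow>\<^sub>0 nat" where "g = single 0 (d - 1) + single 1 1 + single 3 (d - 1)"
  have "(\<Sum>j<n. l j) = (\<Sum>j\<in>{0, 1, 2, 3, 4}. l j)"
    by (rule sum.mono_neutral_right) (use assms in \<open>auto simp: l_def\<close>)
  then have "(\<Sum>j<n. l j) = 0"
    by (simp add: l_def)
  moreover have "keys (l j) \<subseteq> {k. weight (S j) k = 1}" for j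
    using keys_var_diff_weight[of "{0, 2}" 0 2, where 'a = 'a] keys_var_diff_weight[of "{0, 1}" 1 0, where 'a = 'a]
      keys_var_diff_weight[of "{1, 2}" 2 1, where 'a = 'a] keys_var_weight[of "{3}" 3, where 'a = 'a]
    unfolding l_def S_def by simp
  moreover have "weight (S j) t < d" for j
    using assms(2) by (simp add: S_def t_def weight_add weight_single) presburger
  moreover have "weight (S 2) t < d - 1"
    using assms(2) by (simp add: S_def t_def weight_add weight_single)
  moreover have "keys g \<subseteq> {..<n}" "mdeg g = Suc (2 * d - 2)"
    using assms by (auto simp: g_def keys_add_exps mdeg_add split: if_splits)
  moreover have "subst_coeff l n t g = - of_nat (d - 1)"
  proof -
    let ?A = "(var 0 - var 2 :: 'a mpoly) ^ (d - 1)"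
    let ?s = "single 0 (d - 2) + single 1 1 + single 2 1 :: nat \<Rightarrow>\<^sub>0 nat"
    have "subst_coeff l n t g = lookup (\<Prod>j\<in>{0, 1, 3}. l j ^ lookup g j) t"
      by (rule subst_coeff_eq_lookup_prod) (use assms(1) in \<open>auto simp: g_def lookup_add lookup_single\<close>)
    also have "(\<Prod>j\<in>{0, 1, 3}. l j ^ lookup g j) = (?A * var 1 - ?A * var 0) * single (single 3 (d - 1)) 1"
      by (simp add: l_def g_def lookup_add lookup_single var_power monom_def algebra_simps)
    also have "lookup \<dots> t = lookup (?A * var 1) ?s - lookup (?A * var 0) ?s"
      using lookup_mult_single_add[where A = "?A * var 1 - ?A * var 0" and m = "single 3 (d - 1)" and c = 1 and k = ?s]
      by (simp add: t_def lookup_minus)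
    also have "lookup (?A * var 1) ?s = - of_nat (d - 1)"
    proof -
      have "?s = (single 0 (d - 1 - 1) + single 2 1) + single 1 1"
        by (simp add: ac_simps numeral_2_eq_2)
      then show ?thesis
        using lookup_var_diff_power_mixed[of 0 2 "d - 1", where 'a = 'a]
          lookup_mult_var_add[of ?A 1 "single 0 (d - 1 - 1) + single 2 1"]
        by simp
    qed
    also have "lookup (?A * var 0) ?s = 0"
    proof -
      have "?s = (single 0 (d - 3) + single 1 1 + single 2 1) + single 0 1"
        using assms(2) by (auto intro!: poly_mapping_eqI simp: lookup_add lookup_single when_def)
      moreover have "keys ?A \<subseteq> {k. weight {1} k = (d - 1) * 0}"
        by (rule keys_power_weight) (use keys_diff[of "var 0 :: 'a mpoly" "var 2"] keys_var_weight[of "{1}"] in force)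
      then have "single 0 (d - 3) + single 1 1 + single 2 1 \<notin> keys ?A"
        by (auto simp: weight_add weight_single)
      ultimately show ?thesis
        using lookup_mult_var_add[of ?A 0 "single 0 (d - 3) + single 1 1 + single 2 1"]
        by (simp add: in_keys_iff)
    qed
    finally show ?thesis
      by simp
  qed
  moreover have "(of_nat (d - 1) :: 'a) \<noteq> 0"
    using assms(2) by simp
  ultimately show ?thesis
    using assms(1) by (intro gen_exps_not_mult_surjective_if_subst) auto
qed

theorem lemma4p5:
  fixes n d :: nat
  assumes "(n \<ge> 5 \<and> d \<ge> 4) \<or> (n \<ge> 6 \<and> d \<ge> 3) \<or> (n \<ge> 7 \<and> d \<ge> 2)"
  shows "\<exists>G :: 'a::field_char_0 mpoly set.
           G \<subseteq> {monom m | m. Poly_Mapping.keys m \<subseteq> {..<n} \<and> mdeg m = d}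
         \<and> card G = 2 * n - 2
         \<and> (\<forall>H. finite H \<and> H \<subseteq> polyS n \<and> ideal_gen n H = ideal_gen n G \<longrightarrow> 2 * n - 2 \<le> card H)
         \<and> artinian_quot n (ideal_gen n G)
         \<and> fails_WLP_in_degree n (ideal_gen n G) (2 * d - 2)"
proof (intro exI conjI allI impI)
  have "5 \<le> n" "2 \<le> d"
    using assms by auto
  let ?M = "gen_exps n d" and ?I = "ideal_gen n (monom ` gen_exps n d :: 'a mpoly set)"
  have card_M: "card ?M = 2 * n - 2"
    using \<open>5 \<le> n\<close> \<open>2 \<le> d\<close> by (simp add: card_gen_exps)
  show "monom ` ?M \<subseteq> {monom m | m. keys m \<subseteq> {..<n} \<and> mdeg m = d}"
    using gen_exps_keys_mdeg \<open>5 \<le> n\<close> \<open>2 \<le> d\<close> by fastforce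
  show "card (monom ` ?M :: 'a mpoly set) = 2 * n - 2"
    using card_M by (simp add: card_image inj_on_subset[OF inj_monom])
  show "2 * n - 2 \<le> card H" if "finite H \<and> H \<subseteq> polyS n \<and> ideal_gen n H = ?I" for H
  proof -
    have "card ?M \<le> card H"
      using that gen_exps_antichain \<open>5 \<le> n\<close> \<open>2 \<le> d\<close>
      by (intro card_le_card_if_ideal_gen_eq[OF finite_gen_exps]) auto
    then show ?thesis
      using card_M by simp
  qed
  show "artinian_quot n ?I"
    using \<open>2 \<le> d\<close> by (intro artinian_quot_if_pure_powers[where d = d] finite_gen_exps) (auto simp: gen_exps_def)
  have "\<not> mult_injective n ?I (2 * d - 2)"
    using \<open>5 \<le> n\<close> \<open>2 \<le> d\<close> by (intro gen_exps_not_mult_injective) auto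
  moreover have "\<not> mult_surjective n ?I (2 * d - 2)"
    using assms gen_exps_not_mult_surjective_triangle gen_exps_not_mult_surjective_pairs[of n 2 d]
      gen_exps_not_mult_surjective_pairs[of n 6 d] by force
  ultimately show "fails_WLP_in_degree n ?I (2 * d - 2)"
    by (simp add: fails_WLP_in_degree_def)
qed

end
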